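(* Let $\Delta$ and $\Gamma$ be finite simplicial graphs. If $\mathbb{G}(\Delta)$ and $\mathbb{G}(\Gamma)$ are commensurable, then $\mathbb{G}(\Gamma)$ is isomorphic to a subgroup of $\mathbb{G}(\Delta)$ and $\mathbb{G}(\Delta)$ is isomorphic to a subgroup of $\mathbb{G}(\Gamma)$.
   Context: $\mathbb{G}(\Gamma)$ is the pc group (right-angled Artin group) with generators $V(\Gamma)$ and relations $[u,v]=1$ for each edge of $\Gamma$. Two groups $G,G'$ are (abstractly) commensurable if there are finite-index subgroups $H\le G$, $H'\le G'$ with $H\cong H'$. *)

theory Defs
  imports "HOL-Algebra.Algebra"
begin

definition simplicial_graph :: "'v set \<Rightarrow> ('v \<Rightarrow> 'v \<Rightarrow> bool) \<Rightarrow> bool" where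
  "simplicial_graph V E \<longleftrightarrow> finite V \<and>
     (\<forall>u w. E u w \<longrightarrow> u \<in> V \<and> w \<in> V \<and> E w u \<and> u \<noteq> w)"

text \<open>Words in the generators and their inverses: a letter (v, True) is v,
  (v, False) is v inverse.\<close>
type_synonym 'v word = "('v \<times> bool) list"

inductive raag_step :: "('v \<Rightarrow> 'v \<Rightarrow> bool) \<Rightarrow> 'v word \<Rightarrow> 'v word \<Rightarrow> bool"
  for E where
  cancel: "raag_step E (xs @ [(v, b), (v, \<not> b)] @ ys) (xs @ ys)"
| commute: "E u w \<Longrightarrow> raag_step E (xs @ [(u, b), (w, c)] @ ys) (xs @ [(w, c), (u, b)] @ ys)"

definition raag_rel :: "'v set \<Rightarrow> ('v \<Rightarrow> 'v \<Rightarrow> bool) \<Rightarrow> ('v word \<times> 'v word) set" where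
  "raag_rel V E = {(x, y). x \<in> lists (V \<times> UNIV) \<and> y \<in> lists (V \<times> UNIV) \<and>
      (x, y) \<in> ({(a, b). raag_step E a b} \<union> {(a, b). raag_step E b a})\<^sup>*}"

definition raag :: "'v set \<Rightarrow> ('v \<Rightarrow> 'v \<Rightarrow> bool) \<Rightarrow> 'v word set monoid" where
  "raag V E = \<lparr> carrier = lists (V \<times> UNIV) // raag_rel V E,
      monoid.mult = (\<lambda>A B. \<Union>a\<in>A. \<Union>b\<in>B. raag_rel V E `` {a @ b}),
      monoid.one = raag_rel V E `` {[]} \<rparr>"

definition commensurable :: "('a, 'c) monoid_scheme \<Rightarrow> ('b, 'd) monoid_scheme \<Rightarrow> bool" where
  "commensurable G G' \<longleftrightarrow> (\<exists>H H'. subgroup H G \<and> finite (rcosets\<^bsub>G\<^esub> H) \<and>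
      subgroup H' G' \<and> finite (rcosets\<^bsub>G'\<^esub> H') \<and>
      G\<lparr>carrier := H\<rparr> \<cong> G'\<lparr>carrier := H'\<rparr>)"

end

theory Submission
  imports Defs
begin

text \<open>Every right-angled Artin group embeds into each of its finite-index subgroups \<open>H\<close>: choose
  \<open>N > 0\<close> with \<open>v\<^sup>N \<in> H\<close> for all generators \<open>v\<close>; then \<open>v \<mapsto> v\<^sup>N\<close> is an injective
  endomorphism with image in \<open>H\<close>. Injectivity comes from a normal form: letters act on words
  modulo commutation by left multiplication with cancellation, which yields a reduction map that
  respects the defining relations and commutes with replacing every letter by its \<open>N\<close>-th power,
  so a word whose image is trivial reduces to the empty word. If \<open>H \<cong> H'\<close> with \<open>H\<close>, \<open>H'\<close> of
  finite index in \<open>\<G>(\<Delta>)\<close>, \<open>\<G>(\<Gamma>)\<close>, then \<open>\<G>(\<Delta>)\<close> embeds into \<open>H \<cong> H' \<le> \<G>(\<Gamma>)\<close>, and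
  symmetrically.\<close>

section \<open>Finite-index subgroups and commensurability\<close>

lemma (in group) finite_index_pow_mem:
  assumes H: "subgroup H G" and fin: "finite (rcosets H)" and g: "g \<in> carrier G"
  shows "\<exists>n::nat. 0 < n \<and> g [^] n \<in> H"
proof -
  let ?f = "\<lambda>k::nat. H #> g [^] k"
  have "range ?f \<subseteq> rcosets H" using rcosetsI[OF subgroup.subset[OF H]] g by blast
  then have "\<not> inj ?f" using fin finite_subset finite_imageD by blast
  then obtain i j where ij: "?f i = ?f j" "i < j"
    unfolding inj_def by (metis linorder_neqE_nat)
  have "g [^] j \<in> H #> g [^] i" using repr_independenceD[OF H _ ij(1)] g by simp
  then have "g [^] j \<otimes> inv (g [^] i) \<in> H" using subgroup.rcos_module_imp[OF H is_group] g by simp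
  moreover have "g [^] j = g [^] (j - i) \<otimes> g [^] i" using nat_pow_mult[OF g, of "j - i" i] ij(2) by simp
  ultimately have "g [^] (j - i) \<in> H" using g by (simp add: m_assoc)
  with ij(2) show ?thesis by (intro exI[of _ "j - i"]) simp
qed

lemma (in group) finite_index_common_pow_mem:
  assumes H: "subgroup H G" and fin: "finite (rcosets H)"
    and A: "finite A" "A \<subseteq> carrier G"
  shows "\<exists>N::nat. 0 < N \<and> (\<forall>g\<in>A. g [^] N \<in> H)"
proof -
  obtain n where n: "\<forall>g\<in>A. 0 < n g \<and> g [^] (n g :: nat) \<in> H"
    using finite_index_pow_mem[OF H fin] A(2) by (metis subsetD)
  define N where "N = (\<Prod>g\<in>A. n g)"
  have "g [^] N \<in> H" if g: "g \<in> A" for g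
  proof -
    have "N = n g * (\<Prod>h\<in>A - {g}. n h)" unfolding N_def using A(1) g by (simp add: prod.remove)
    then have "g [^] N = (g [^] n g) [^] (\<Prod>h\<in>A - {g}. n h)"
      using g A(2) by (auto simp: nat_pow_pow)
    moreover have "(g [^] n g) [^] int (\<Prod>h\<in>A - {g}. n h) \<in> H"
      using subgroup_int_pow_closed[OF H] n g by blast
    ultimately show ?thesis by (metis int_pow_int)
  qed
  moreover have "0 < N" unfolding N_def using n by (simp add: prod_pos)
  ultimately show ?thesis by blast
qed

lemma (in group) mon_imp_iso_subgroup:
  assumes "group H" and "f \<in> mon G H"
  shows "\<exists>K. subgroup K H \<and> G \<cong> H\<lparr>carrier := K\<rparr>"
proof (intro exI conjI)
  let ?K = "generate H (carrier H \<inter> f ` carrier G)"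
  show "subgroup ?K H" using group.generate_is_subgroup[OF assms(1)] by blast
  have "f \<in> iso G (subgroup_generated H (f ` carrier G))"
    using iso_onto_image assms by blast
  then show "G \<cong> H\<lparr>carrier := ?K\<rparr>" unfolding subgroup_generated_def by (rule is_isoI)
qed

lemma commensurable_sym:
  assumes "group G" "group G'" "commensurable G G'"
  shows "commensurable G' G"
  using assms group.iso_sym subgroup.subgroup_is_group unfolding commensurable_def by metis

lemma commensurable_embeds:
  assumes G: "group G" and G': "group G'" and "commensurable G G'"
    and embeds: "\<And>H. subgroup H G \<Longrightarrow> finite (rcosets\<^bsub>G\<^esub> H) \<Longrightarrow> \<exists>f. f \<in> mon G (G\<lparr>carrier := H\<rparr>)"
  shows "\<exists>K. subgroup K G' \<and> G \<cong> G'\<lparr>carrier := K\<rparr>"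
proof -
  obtain H H' \<phi> where H: "subgroup H G" "finite (rcosets\<^bsub>G\<^esub> H)" and H': "subgroup H' G'"
    and \<phi>: "\<phi> \<in> iso (G\<lparr>carrier := H\<rparr>) (G'\<lparr>carrier := H'\<rparr>)"
    using assms(3) unfolding commensurable_def is_iso_def by blast
  obtain f where f: "f \<in> mon G (G\<lparr>carrier := H\<rparr>)" using embeds[OF H] by blast
  have "\<phi> \<circ> f \<in> mon G (G'\<lparr>carrier := H'\<rparr>)"
    using mon_compose[OF f] \<phi> iso_iff_mon_epi by blast
  then have "\<phi> \<circ> f \<in> mon G G'"
    using subgroup.subset[OF H'] by (auto simp: mon_def hom_def)
  then show ?thesis by (rule group.mon_imp_iso_subgroup[OF G G'])
qed

section \<open>Words modulo commutation\<close>

definition letter_inv :: "'v \<times> bool \<Rightarrow> 'v \<times> bool" where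
  "letter_inv x = (fst x, \<not> snd x)"

lemma fst_letter_inv [simp]: "fst (letter_inv x) = fst x"
  by (simp add: letter_inv_def)

lemma letter_inv_letter_inv [simp]: "letter_inv (letter_inv x) = x"
  by (simp add: letter_inv_def)

lemma letter_inv_neq [simp]: "letter_inv x \<noteq> x" "x \<noteq> letter_inv x"
  by (cases x, simp add: letter_inv_def)+

inductive comm_step :: "('v \<Rightarrow> 'v \<Rightarrow> bool) \<Rightarrow> 'v word \<Rightarrow> 'v word \<Rightarrow> bool" for E where
  "E (fst x) (fst y) \<Longrightarrow> comm_step E (xs @ [x, y] @ ys) (xs @ [y, x] @ ys)"

abbreviation comm_equiv :: "('v \<Rightarrow> 'v \<Rightarrow> bool) \<Rightarrow> 'v word \<Rightarrow> 'v word \<Rightarrow> bool" where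
  "comm_equiv E \<equiv> (comm_step E)\<^sup>*\<^sup>*"

text \<open>\<open>leads E y w\<close>: the first letter of \<open>w\<close> not commuting with \<open>y\<close> is \<open>y\<close> itself,
  i.e. \<open>w\<close> can be rearranged to start with \<open>y\<close>.\<close>
definition leads :: "('v \<Rightarrow> 'v \<Rightarrow> bool) \<Rightarrow> 'v \<times> bool \<Rightarrow> 'v word \<Rightarrow> bool" where
  "leads E y w = (case dropWhile (\<lambda>z. E (fst z) (fst y)) w of [] \<Rightarrow> False | z # _ \<Rightarrow> z = y)"

text \<open>Left multiplication of a reduced word by a letter: cancel against a leading inverse
  letter if there is one, otherwise prepend.\<close>
definition mult_letter :: "('v \<Rightarrow> 'v \<Rightarrow> bool) \<Rightarrow> 'v \<times> bool \<Rightarrow> 'v word \<Rightarrow> 'v word" where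
  "mult_letter E x w = (case dropWhile (\<lambda>z. E (fst z) (fst x)) w of [] \<Rightarrow> x # w
      | z # r \<Rightarrow> if z = letter_inv x then takeWhile (\<lambda>z. E (fst z) (fst x)) w @ r else x # w)"

definition reduced :: "('v \<Rightarrow> 'v \<Rightarrow> bool) \<Rightarrow> 'v word \<Rightarrow> bool" where
  "reduced E w \<longleftrightarrow> \<not> (\<exists>a y b. comm_equiv E w (a @ [y, letter_inv y] @ b))"

definition reduce :: "('v \<Rightarrow> 'v \<Rightarrow> bool) \<Rightarrow> 'v word \<Rightarrow> 'v word" where
  "reduce E w = foldr (mult_letter E) w []"

definition power_word :: "nat \<Rightarrow> 'v word \<Rightarrow> 'v word" where
  "power_word N w = concat (map (replicate N) w)"

lemma power_word_simps [simp]: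
  "power_word N [] = []"
  "power_word N (x # w) = replicate N x @ power_word N w"
  "power_word N (a @ b) = power_word N a @ power_word N b"
  by (simp_all add: power_word_def)

lemma length_power_word: "length (power_word N w) = N * length w"
  by (induct w) auto

lemma comm_step_append: "comm_step E a b \<Longrightarrow> comm_step E (c @ a @ d) (c @ b @ d)"
proof (induct rule: comm_step.induct)
  case (1 x y xs ys)
  then have "comm_step E ((c @ xs) @ [x, y] @ (ys @ d)) ((c @ xs) @ [y, x] @ (ys @ d))"
    by (rule comm_step.intros)
  then show ?case by simp
qed

lemma comm_equiv_append: "comm_equiv E a b \<Longrightarrow> comm_equiv E (c @ a @ d) (c @ b @ d)"
  by (induct rule: rtranclp_induct) (auto intro: rtranclp.rtrancl_into_rtrancl comm_step_append)

lemma comm_equiv_Cons: "comm_equiv E a b \<Longrightarrow> comm_equiv E (x # a) (x # b)"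
  using comm_equiv_append[of E a b "[x]" "[]"] by simp

lemma comm_equiv_length: "comm_equiv E a b \<Longrightarrow> length a = length b"
  by (induct rule: rtranclp_induct) (auto elim!: comm_step.cases)

lemma comm_equiv_Nil: "comm_equiv E [] b \<Longrightarrow> b = []"
  using comm_equiv_length by fastforce

lemma comm_equiv_set: "comm_equiv E a b \<Longrightarrow> set a = set b"
proof (induct rule: rtranclp_induct)
  case (step b c)
  from step(2) have "set b = set c" by cases auto
  with step(3) show ?case by simp
qed simp

lemma comm_equiv_swap: "E (fst x) (fst y) \<Longrightarrow> comm_equiv E (x # y # r) (y # x # r)"
  using comm_step.intros[of E x y "[]" r] by auto

lemma comm_equiv_move_front:
  "\<forall>z\<in>set p. E (fst z) (fst x) \<Longrightarrow> comm_equiv E (p @ x # q) (x # p @ q)"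
proof (induct p)
  case (Cons z p)
  then have "comm_equiv E (z # p @ x # q) (z # x # p @ q)" by (simp add: comm_equiv_Cons)
  also have "comm_equiv E (z # x # p @ q) (x # z # p @ q)" using Cons by (simp add: comm_equiv_swap)
  finally show ?case by simp
qed simp

lemma leads_append_not_in:
  "leads E x (a @ r) \<Longrightarrow> x \<notin> set a \<Longrightarrow> (\<forall>z\<in>set a. E (fst z) (fst x)) \<and> leads E x r"
proof (induction a)
  case (Cons z a)
  have "E (fst z) (fst x)"
  proof (rule ccontr)
    assume "\<not> E (fst z) (fst x)"
    then have "leads E x (z # a @ r) \<longleftrightarrow> z = x" by (simp add: leads_def)
    with Cons.prems show False by simp
  qed
  with Cons.prems(1) have "leads E x (a @ r)" by (simp add: leads_def)
  with Cons.IH Cons.prems(2) \<open>E (fst z) (fst x)\<close> show ?case by simp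
qed simp

lemma leads_Cons_commuting: "E (fst x) (fst y) \<Longrightarrow> leads E y (x # w) = leads E y w"
  unfolding leads_def by simp

lemma dropWhile_power_word:
  assumes "0 < N"
  shows "dropWhile P (power_word N r) = power_word N (dropWhile P r)"
proof (induct r)
  case (Cons z r)
  from assms obtain k where "N = Suc k" by (cases N) auto
  with Cons show ?case by (simp add: dropWhile_append)
qed simp

lemma leads_power_word:
  assumes "0 < N" shows "leads E y (power_word N r) = leads E y r"
proof (cases "dropWhile (\<lambda>z. E (fst z) (fst y)) r")
  case Nil
  show ?thesis unfolding leads_def dropWhile_power_word[OF assms] Nil by simp
next
  case (Cons z rs)
  from assms obtain k where "N = Suc k" by (cases N) auto
  then show ?thesis unfolding leads_def dropWhile_power_word[OF assms] Cons by simp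
qed

locale commutation =
  fixes E :: "'v \<Rightarrow> 'v \<Rightarrow> bool"
  assumes sym: "E u w \<Longrightarrow> E w u" and irrefl: "\<not> E u u"
begin

lemma comm_equiv_sym: "comm_equiv E a b \<Longrightarrow> comm_equiv E b a"
proof -
  have "symp (comm_step E)"
    by (rule sympI, erule comm_step.cases) (metis comm_step.intros sym)
  then show "comm_equiv E a b \<Longrightarrow> comm_equiv E b a"
    by (rule sympD[OF symp_rtranclp])
qed

lemma comm_step_remove1: "comm_step E a b \<Longrightarrow> comm_equiv E (remove1 x a) (remove1 x b)"
proof (induct rule: comm_step.induct)
  case (1 u w xs ys)
  have "u \<noteq> w" using 1 irrefl by auto
  consider "x \<in> set xs" | "x \<notin> set xs" "x = u \<or> x = w" | "x \<notin> set xs" "x \<noteq> u" "x \<noteq> w"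
    by blast
  then show ?case
  proof cases
    case 1
    then show ?thesis using comm_step.intros[of E u w "remove1 x xs" ys] \<open>E (fst u) (fst w)\<close>
      by (simp add: remove1_append r_into_rtranclp)
  next
    case 2
    then show ?thesis using \<open>u \<noteq> w\<close> by (auto simp: remove1_append)
  next
    case 3
    then show ?thesis using comm_step.intros[of E u w xs "remove1 x ys"] \<open>E (fst u) (fst w)\<close>
      by (simp add: remove1_append r_into_rtranclp)
  qed
qed

lemma comm_equiv_remove1: "comm_equiv E a b \<Longrightarrow> comm_equiv E (remove1 x a) (remove1 x b)"
proof (induct rule: rtranclp_induct)
  case (step b c)
  then show ?case using comm_step_remove1[of b c x] by (meson rtranclp_trans)
qed simp

lemma comm_equiv_Cons_cancel: "comm_equiv E (x # a) (x # b) \<Longrightarrow> comm_equiv E a b"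
  using comm_equiv_remove1[of "x # a" "x # b" x] by simp

lemma leads_comm_step: "comm_step E a b \<Longrightarrow> leads E y a \<Longrightarrow> leads E y b"
proof (induct rule: comm_step.induct)
  case (1 u w xs ys)
  let ?Q = "\<lambda>z. E (fst z) (fst y)"
  show ?case
  proof (cases "\<forall>z\<in>set xs. ?Q z")
    case False
    then obtain z zs where z: "dropWhile ?Q xs = z # zs"
      by (cases "dropWhile ?Q xs") (auto simp: dropWhile_eq_Nil_conv)
    have "dropWhile ?Q (xs @ l) = z # zs @ l" for l
      using False z by (auto simp: dropWhile_append)
    then show ?thesis using 1(2) unfolding leads_def by simp
  next
    case True
    then have d: "dropWhile ?Q (xs @ l) = dropWhile ?Q l" for l
      by (simp add: dropWhile_append2)
    have "u \<noteq> y \<and> w \<noteq> y" if "\<not> ?Q w" "\<not> ?Q u" using 1 that sym by auto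
    then show ?thesis using 1 d unfolding leads_def by (cases "?Q u"; cases "?Q w") auto
  qed
qed

lemma leads_comm_equiv: "comm_equiv E a b \<Longrightarrow> leads E y a \<Longrightarrow> leads E y b"
  by (induct rule: rtranclp_induct) (auto intro: leads_comm_step)

lemma leads_Cons [simp]: "leads E y (y # w)"
  using irrefl by (simp add: leads_def)

lemma leads_if_comm_equiv_Cons: "comm_equiv E w (y # r) \<Longrightarrow> leads E y w"
  using leads_comm_equiv[OF comm_equiv_sym] leads_Cons by metis

lemma leads_comm_equiv_front:
  assumes "leads E y w"
  obtains r where "dropWhile (\<lambda>z. E (fst z) (fst y)) w = y # r"
    and "comm_equiv E w (y # takeWhile (\<lambda>z. E (fst z) (fst y)) w @ r)"
proof -
  let ?Q = "\<lambda>z. E (fst z) (fst y)"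
  obtain r where r: "dropWhile ?Q w = y # r"
    using assms unfolding leads_def by (auto split: list.splits)
  have "w = takeWhile ?Q w @ y # r" using r by (metis takeWhile_dropWhile_id)
  then have "comm_equiv E w (y # takeWhile ?Q w @ r)"
    by (metis comm_equiv_move_front set_takeWhileD)
  with r show thesis by (rule that)
qed

lemma mult_letter_not_leads:
  assumes "\<not> leads E (letter_inv x) w" shows "mult_letter E x w = x # w"
proof (cases "dropWhile (\<lambda>z. E (fst z) (fst x)) w")
  case (Cons z r)
  then have "z \<noteq> letter_inv x" using assms unfolding leads_def by simp
  with Cons show ?thesis unfolding mult_letter_def by simp
next
  case Nil
  show ?thesis unfolding mult_letter_def Nil by simp
qed

lemma mult_letter_letter_inv_Cons [simp]: "mult_letter E x (letter_inv x # r) = r"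
  using irrefl by (simp add: mult_letter_def)

lemma mult_letter_leads:
  assumes "leads E (letter_inv x) w" shows "comm_equiv E w (letter_inv x # mult_letter E x w)"
proof -
  obtain r where r: "dropWhile (\<lambda>z. E (fst z) (fst x)) w = letter_inv x # r"
    and w: "comm_equiv E w (letter_inv x # takeWhile (\<lambda>z. E (fst z) (fst x)) w @ r)"
    using leads_comm_equiv_front[OF assms] by auto
  from r have "mult_letter E x w = takeWhile (\<lambda>z. E (fst z) (fst x)) w @ r"
    unfolding mult_letter_def by simp
  with w show ?thesis by simp
qed

lemma mult_letter_cancel:
  assumes "comm_equiv E w (letter_inv x # r)" shows "comm_equiv E (mult_letter E x w) r"
proof -
  have "comm_equiv E w (letter_inv x # mult_letter E x w)"
    using assms leads_if_comm_equiv_Cons mult_letter_leads by blast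
  then have "comm_equiv E (letter_inv x # mult_letter E x w) (letter_inv x # r)"
    using assms comm_equiv_sym by (meson rtranclp_trans)
  then show ?thesis by (rule comm_equiv_Cons_cancel)
qed

lemma mult_letter_comm_equiv:
  assumes ab: "comm_equiv E a b" shows "comm_equiv E (mult_letter E x a) (mult_letter E x b)"
proof (cases "leads E (letter_inv x) a")
  case True
  then have "comm_equiv E b (letter_inv x # mult_letter E x a)"
    using ab comm_equiv_sym mult_letter_leads by (meson rtranclp_trans)
  then show ?thesis by (rule comm_equiv_sym[OF mult_letter_cancel])
next
  case False
  then have "\<not> leads E (letter_inv x) b" using ab leads_comm_equiv comm_equiv_sym by blast
  with False ab show ?thesis by (simp add: mult_letter_not_leads comm_equiv_Cons)
qed

lemma foldr_mult_letter_comm_equiv: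
  "comm_equiv E a b \<Longrightarrow> comm_equiv E (foldr (mult_letter E) xs a) (foldr (mult_letter E) xs b)"
  by (induct xs) (auto intro: mult_letter_comm_equiv)

lemma mult_letter_commute_half:
  assumes xy: "E (fst x) (fst y)"
    and y: "leads E (letter_inv y) w" and x: "\<not> leads E (letter_inv x) w"
  shows "comm_equiv E (mult_letter E x (mult_letter E y w)) (mult_letter E y (mult_letter E x w))"
proof -
  let ?w' = "mult_letter E y w"
  have w: "comm_equiv E w (letter_inv y # ?w')" using y by (rule mult_letter_leads)
  have "\<not> leads E (letter_inv x) ?w'"
  proof
    assume "leads E (letter_inv x) ?w'"
    then have "comm_equiv E w (letter_inv y # letter_inv x # mult_letter E x ?w')"
      using w by (meson comm_equiv_Cons mult_letter_leads rtranclp_trans)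
    also have "comm_equiv E \<dots> (letter_inv x # letter_inv y # mult_letter E x ?w')"
      using xy sym by (intro comm_equiv_swap) simp
    finally show False using x leads_if_comm_equiv_Cons by blast
  qed
  then have left: "mult_letter E x ?w' = x # ?w'" by (rule mult_letter_not_leads)
  have "comm_equiv E (x # w) (x # letter_inv y # ?w')" using w by (rule comm_equiv_Cons)
  also have "comm_equiv E \<dots> (letter_inv y # x # ?w')" using xy by (intro comm_equiv_swap) simp
  finally have "comm_equiv E (mult_letter E y (x # w)) (x # ?w')" by (rule mult_letter_cancel)
  then show ?thesis using left mult_letter_not_leads[OF x] comm_equiv_sym by simp
qed

lemma mult_letter_commute:
  assumes xy: "E (fst x) (fst y)"
  shows "comm_equiv E (mult_letter E x (mult_letter E y w)) (mult_letter E y (mult_letter E x w))"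
proof (cases "leads E (letter_inv x) w"; cases "leads E (letter_inv y) w")
  assume lx: "leads E (letter_inv x) w" and ly: "leads E (letter_inv y) w"
  let ?a = "mult_letter E x w" and ?b = "mult_letter E y w"
  have wa: "comm_equiv E w (letter_inv x # ?a)" using lx by (rule mult_letter_leads)
  have "leads E (letter_inv y) ?a"
    using leads_comm_equiv[OF wa ly] xy by (simp add: leads_Cons_commuting)
  then have "comm_equiv E w (letter_inv x # letter_inv y # mult_letter E y ?a)"
    using wa by (meson comm_equiv_Cons mult_letter_leads rtranclp_trans)
  also have "comm_equiv E \<dots> (letter_inv y # letter_inv x # mult_letter E y ?a)"
    using xy by (intro comm_equiv_swap) simp
  finally have "comm_equiv E (letter_inv y # ?b) (letter_inv y # letter_inv x # mult_letter E y ?a)"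
    using mult_letter_leads[OF ly] comm_equiv_sym by (meson rtranclp_trans)
  then have "comm_equiv E ?b (letter_inv x # mult_letter E y ?a)" by (rule comm_equiv_Cons_cancel)
  then show ?thesis by (rule mult_letter_cancel)
next
  assume "leads E (letter_inv x) w" "\<not> leads E (letter_inv y) w"
  then show ?thesis using mult_letter_commute_half[of y x w] xy sym comm_equiv_sym by blast
next
  assume "\<not> leads E (letter_inv x) w" "leads E (letter_inv y) w"
  then show ?thesis using mult_letter_commute_half[of x y w] xy by blast
next
  assume "\<not> leads E (letter_inv x) w" "\<not> leads E (letter_inv y) w"
  moreover have "E (fst y) (fst x)" using xy sym by blast
  ultimately show ?thesis using xy
    by (simp add: mult_letter_not_leads leads_Cons_commuting comm_equiv_swap)
qed

lemma reduced_Nil: "reduced E []"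
  unfolding reduced_def using comm_equiv_Nil by fastforce

lemma reduced_comm_equiv_Cons: "reduced E w \<Longrightarrow> comm_equiv E w (y # r) \<Longrightarrow> reduced E r"
  unfolding reduced_def by (metis append_Cons comm_equiv_Cons rtranclp_trans)

text \<open>Were there a cancelling pair in \<open>x # w\<close>, removing \<open>x\<close> would leave one in \<open>w\<close>,
  unless \<open>x\<close> itself belongs to the pair; then \<open>w\<close> would start with \<open>x\<^sup>-\<^sup>1\<close>.\<close>
lemma reduced_Cons:
  assumes w: "reduced E w" and x: "\<not> leads E (letter_inv x) w"
  shows "reduced E (x # w)"
  unfolding reduced_def
proof
  assume "\<exists>a y b. comm_equiv E (x # w) (a @ [y, letter_inv y] @ b)"
  then obtain a y b where xw: "comm_equiv E (x # w) (a @ [y, letter_inv y] @ b)" by blast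
  then have w': "comm_equiv E w (remove1 x (a @ [y, letter_inv y] @ b))"
    using comm_equiv_remove1[OF xw, of x] by simp
  show False
  proof (cases "x \<in> set a \<or> x \<notin> {y, letter_inv y}")
    case True
    then have "\<exists>a' b'. remove1 x (a @ [y, letter_inv y] @ b) = a' @ [y, letter_inv y] @ b'"
      by (auto simp: remove1_append)
    then show False using w w' unfolding reduced_def by metis
  next
    case False
    then have xa: "x \<notin> set a" and xy: "x = y \<or> x = letter_inv y" by auto
    have "leads E x (a @ [y, letter_inv y] @ b)" using xw leads_comm_equiv leads_Cons by blast
    with xa have a: "\<forall>z\<in>set a. E (fst z) (fst x)" and "leads E x ([y, letter_inv y] @ b)"
      by (auto dest: leads_append_not_in)
    with xy irrefl have "x = y" by (auto simp: leads_def)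
    with xa w' have "comm_equiv E w (a @ letter_inv x # b)" by (simp add: remove1_append)
    also have "comm_equiv E \<dots> (letter_inv x # a @ b)" using a by (simp add: comm_equiv_move_front)
    finally show False using x leads_if_comm_equiv_Cons by blast
  qed
qed

lemma reduced_mult_letter: "reduced E w \<Longrightarrow> reduced E (mult_letter E x w)"
  by (metis mult_letter_leads mult_letter_not_leads reduced_Cons reduced_comm_equiv_Cons)

lemma mult_letter_inverse:
  assumes w: "reduced E w"
  shows "comm_equiv E (mult_letter E x (mult_letter E (letter_inv x) w)) w"
proof (cases "leads E x w")
  case True
  let ?w' = "mult_letter E (letter_inv x) w"
  have w': "comm_equiv E w (x # ?w')" using True mult_letter_leads[of "letter_inv x" w] by simp
  have "\<not> leads E (letter_inv x) ?w'"
  proof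
    assume "leads E (letter_inv x) ?w'"
    then have "comm_equiv E w ([] @ [x, letter_inv x] @ mult_letter E x ?w')"
      using w' by (simp add: comm_equiv_Cons mult_letter_leads rtranclp_trans)
    then show False using w unfolding reduced_def by blast
  qed
  then show ?thesis using w' comm_equiv_sym by (simp add: mult_letter_not_leads)
next
  case False
  then show ?thesis by (simp add: mult_letter_not_leads)
qed

lemma reduced_reduce: "reduced E (reduce E w)"
  unfolding reduce_def by (induct w) (auto simp: reduced_Nil reduced_mult_letter)

lemma reduce_raag_step: "raag_step E a b \<Longrightarrow> comm_equiv E (reduce E a) (reduce E b)"
proof (induct rule: raag_step.induct)
  case (cancel xs v b ys)
  have "comm_equiv E (mult_letter E (v, b) (mult_letter E (v, \<not> b) (reduce E ys))) (reduce E ys)"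
    using mult_letter_inverse[OF reduced_reduce[of ys], of "(v, b)"] by (simp add: letter_inv_def)
  then show ?case unfolding reduce_def by (simp add: foldr_mult_letter_comm_equiv)
next
  case (commute u w xs b c ys)
  then show ?case unfolding reduce_def
    by (simp add: foldr_mult_letter_comm_equiv mult_letter_commute)
qed

lemma comm_equiv_append_swap:
  "\<forall>z\<in>set a. \<forall>u\<in>set b. E (fst z) (fst u) \<Longrightarrow> comm_equiv E (a @ b) (b @ a)"
proof (induct a)
  case (Cons z a)
  then have "comm_equiv E (z # a @ b) (z # b @ a)" by (simp add: comm_equiv_Cons)
  also have "comm_equiv E \<dots> (b @ z # a)"
    using Cons.prems sym by (intro comm_equiv_sym[OF comm_equiv_move_front]) simp
  finally show ?case by simp
qed simp

lemma comm_equiv_power_word: "comm_equiv E a b \<Longrightarrow> comm_equiv E (power_word N a) (power_word N b)"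
proof (induct rule: rtranclp_induct)
  case (step b c)
  from step(2) have "comm_equiv E (power_word N b) (power_word N c)"
  proof cases
    case (1 x y xs ys)
    then have "comm_equiv E (replicate N x @ replicate N y) (replicate N y @ replicate N x)"
      by (intro comm_equiv_append_swap) simp
    from comm_equiv_append[OF this, of "power_word N xs" "power_word N ys"] 1
    show ?thesis by simp
  qed
  with step(3) show ?case by (rule rtranclp_trans)
qed simp

lemma foldr_mult_letter_replicate_cancel:
  "foldr (mult_letter E) (replicate n x) (replicate (n + m) (letter_inv x) @ s) =
     replicate m (letter_inv x) @ s"
proof (induct n arbitrary: m)
  case (Suc n)
  have "foldr (mult_letter E) (replicate (Suc n) x) (replicate (Suc n + m) (letter_inv x) @ s) =
      mult_letter E x (foldr (mult_letter E) (replicate n x) (replicate (n + Suc m) (letter_inv x) @ s))"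
    by (simp del: foldr_replicate)
  also have "\<dots> = replicate m (letter_inv x) @ s"
    using Suc[of "Suc m"] by (simp del: foldr_replicate)
  finally show ?case .
qed simp

lemma foldr_mult_letter_replicate:
  assumes "\<not> leads E (letter_inv x) w"
  shows "foldr (mult_letter E) (replicate n x) w = replicate n x @ w"
proof (induct n)
  case (Suc n)
  have "\<not> leads E (letter_inv x) (replicate n x @ w)"
    using assms irrefl by (cases n) (simp_all add: leads_def)
  with Suc show ?case by (simp del: foldr_replicate add: mult_letter_not_leads)
qed simp

text \<open>If \<open>r\<close> can be rearranged to start with \<open>x\<^sup>-\<^sup>1\<close>, then \<open>power_word N r\<close> starts with
  \<open>N\<close> copies of it, which the \<open>N\<close> letters \<open>x\<close> cancel one by one; otherwise all \<open>N\<close> letters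
  are prepended.\<close>
lemma foldr_mult_letter_power_word:
  assumes N: "0 < N"
  shows "comm_equiv E (foldr (mult_letter E) (replicate N x) (power_word N r))
           (power_word N (mult_letter E x r))"
proof (cases "leads E (letter_inv x) r")
  case True
  have "comm_equiv E (power_word N r) (replicate (N + 0) (letter_inv x) @ power_word N (mult_letter E x r))"
    using comm_equiv_power_word[OF mult_letter_leads[OF True], of N] by simp
  then have "comm_equiv E (foldr (mult_letter E) (replicate N x) (power_word N r))
      (foldr (mult_letter E) (replicate N x)
         (replicate (N + 0) (letter_inv x) @ power_word N (mult_letter E x r)))"
    by (rule foldr_mult_letter_comm_equiv)
  then show ?thesis by (simp only: foldr_mult_letter_replicate_cancel) simp
next
  case False
  then have "\<not> leads E (letter_inv x) (power_word N r)" using N by (simp add: leads_power_word)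
  then show ?thesis using False
    by (simp del: foldr_replicate add: foldr_mult_letter_replicate mult_letter_not_leads)
qed

lemma reduce_power_word:
  assumes N: "0 < N"
  shows "comm_equiv E (reduce E (power_word N w)) (power_word N (reduce E w))"
proof (induct w)
  case (Cons x w)
  have "reduce E (power_word N (x # w)) =
      foldr (mult_letter E) (replicate N x) (reduce E (power_word N w))"
    by (simp add: reduce_def del: foldr_replicate)
  also have "comm_equiv E \<dots> (foldr (mult_letter E) (replicate N x) (power_word N (reduce E w)))"
    using Cons by (rule foldr_mult_letter_comm_equiv)
  also have "comm_equiv E \<dots> (power_word N (reduce E (x # w)))"
    using foldr_mult_letter_power_word[OF N] by (simp add: reduce_def del: foldr_replicate)
  finally show ?case .
qed (simp add: reduce_def)

lemma reduce_power_word_Nil: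
  assumes "0 < N" and "reduce E (power_word N w) = []"
  shows "reduce E w = []"
proof -
  have "power_word N (reduce E w) = []"
    using reduce_power_word[OF assms(1), of w] assms(2) by (simp add: comm_equiv_Nil)
  then show ?thesis
    using assms(1) length_power_word[of N "reduce E w"] by simp
qed

end

section \<open>Right-angled Artin groups\<close>

locale raag_graph =
  fixes V :: "'v set" and E :: "'v \<Rightarrow> 'v \<Rightarrow> bool"
  assumes graph: "simplicial_graph V E"
begin

sublocale commutation E
  using graph unfolding simplicial_graph_def by unfold_locales auto

abbreviation words :: "'v word set" where
  "words \<equiv> lists (V \<times> UNIV)"

abbreviation moves :: "'v word rel" where
  "moves \<equiv> {(a, b). raag_step E a b} \<union> {(a, b). raag_step E b a}"

abbreviation R :: "'v word rel" where
  "R \<equiv> raag_rel V E"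

lemma raag_rel_iff: "(a, b) \<in> R \<longleftrightarrow> a \<in> words \<and> b \<in> words \<and> (a, b) \<in> moves\<^sup>*"
  unfolding raag_rel_def by simp

lemma equiv_raag_rel: "equiv words R"
proof -
  have "sym (moves\<^sup>*)" by (rule sym_rtrancl) (auto simp: sym_def)
  then show ?thesis
    unfolding equiv_def refl_on_def sym_def trans_def
    by (auto simp: raag_rel_iff intro: rtrancl_trans)
qed

lemma raag_rel_refl: "a \<in> words \<Longrightarrow> (a, a) \<in> R"
  by (simp add: raag_rel_iff)

lemma raag_rel_sym: "(a, b) \<in> R \<Longrightarrow> (b, a) \<in> R"
  using equiv_raag_rel by (meson equiv_def symD)

lemma raag_rel_trans: "(a, b) \<in> R \<Longrightarrow> (b, c) \<in> R \<Longrightarrow> (a, c) \<in> R"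
  using equiv_raag_rel by (meson equiv_def transD)

lemma raag_step_append: "raag_step E a b \<Longrightarrow> raag_step E (c @ a @ d) (c @ b @ d)"
proof (induct rule: raag_step.induct)
  case (cancel xs v b ys)
  show ?case using raag_step.cancel[of E "c @ xs" v b "ys @ d"] by simp
next
  case (commute u w xs b c' ys)
  show ?case using raag_step.commute[of E u w "c @ xs" b c' "ys @ d"] commute by simp
qed

lemma moves_append: "(a, b) \<in> moves\<^sup>* \<Longrightarrow> (c @ a @ d, c @ b @ d) \<in> moves\<^sup>*"
proof (induct rule: rtrancl_induct)
  case (step y z)
  then have "(c @ y @ d, c @ z @ d) \<in> moves" using raag_step_append by blast
  with step(3) show ?case by (rule rtrancl.rtrancl_into_rtrancl)
qed simp

lemma raag_rel_append: "(a, b) \<in> R \<Longrightarrow> (c, d) \<in> R \<Longrightarrow> (a @ c, b @ d) \<in> R"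
  using moves_append[of a b "[]" c] moves_append[of c d b "[]"]
  by (simp add: raag_rel_iff)

lemma comm_equiv_moves: "comm_equiv E a b \<Longrightarrow> (a, b) \<in> moves\<^sup>*"
proof (induct rule: rtranclp_induct)
  case (step y z)
  from step(2) have "raag_step E y z"
    by cases (metis prod.collapse raag_step.commute)
  with step(3) show ?case by (simp add: rtrancl.rtrancl_into_rtrancl)
qed simp

lemma raag_rel_if_comm_equiv: "comm_equiv E a b \<Longrightarrow> a \<in> words \<Longrightarrow> (a, b) \<in> R"
  using comm_equiv_moves[of a b] comm_equiv_set[of E a b] by (simp add: raag_rel_iff lists_eq_set)

lemma reduce_moves: "(a, b) \<in> moves\<^sup>* \<Longrightarrow> comm_equiv E (reduce E a) (reduce E b)"
proof (induct rule: rtrancl_induct)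
  case (step y z)
  then have "comm_equiv E (reduce E y) (reduce E z)"
    using reduce_raag_step comm_equiv_sym by blast
  with step(3) show ?case by (rule rtranclp_trans)
qed simp

lemma raag_rel_mult_letter:
  assumes x: "x \<in> V \<times> UNIV" and w: "w \<in> words"
  shows "(x # w, mult_letter E x w) \<in> R"
proof (cases "leads E (letter_inv x) w")
  case True
  let ?w' = "mult_letter E x w"
  have e: "comm_equiv E w (letter_inv x # ?w')" using True by (rule mult_letter_leads)
  then have "(x # w, x # letter_inv x # ?w') \<in> R"
    using raag_rel_if_comm_equiv[OF comm_equiv_Cons] x w by simp
  moreover have "(x # letter_inv x # ?w', ?w') \<in> R"
  proof -
    obtain v b where "x = (v, b)" by (cases x)
    then have "raag_step E (x # letter_inv x # ?w') ?w'"
      using raag_step.cancel[of E "[]" v b ?w'] by (simp add: letter_inv_def)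
    moreover have "?w' \<in> words" using w comm_equiv_set[OF e] by (simp add: lists_eq_set)
    ultimately show ?thesis
      using x by (auto simp: raag_rel_iff letter_inv_def intro: r_into_rtrancl)
  qed
  ultimately show ?thesis by (rule raag_rel_trans)
next
  case False
  then show ?thesis using x w by (simp add: mult_letter_not_leads raag_rel_refl)
qed

lemma raag_rel_reduce: "w \<in> words \<Longrightarrow> (w, reduce E w) \<in> R"
proof (induct w)
  case (Cons x w)
  then have "(x # w, x # reduce E w) \<in> R"
    using raag_rel_append[of "[x]" "[x]"] raag_rel_refl by auto
  moreover have "reduce E w \<in> words" using Cons raag_rel_iff by auto
  then have "(x # reduce E w, reduce E (x # w)) \<in> R"
    using raag_rel_mult_letter Cons.prems by (simp add: reduce_def)
  ultimately show ?case by (rule raag_rel_trans)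
qed (simp add: reduce_def raag_rel_refl)

lemma raag_rel_Nil_iff_reduce:
  assumes "w \<in> words" shows "(w, []) \<in> R \<longleftrightarrow> reduce E w = []"
proof
  assume "(w, []) \<in> R"
  then have "comm_equiv E (reduce E w) (reduce E [])"
    using reduce_moves by (simp add: raag_rel_iff)
  then have "comm_equiv E [] (reduce E w)" by (simp add: reduce_def comm_equiv_sym)
  then show "reduce E w = []" by (rule comm_equiv_Nil)
next
  assume "reduce E w = []"
  then show "(w, []) \<in> R" using raag_rel_reduce[OF assms] by simp
qed

lemma power_word_words: "w \<in> words \<Longrightarrow> power_word N w \<in> words"
  by (induct w) auto

lemma moves_replicate_cancel: "(replicate n x @ replicate n (letter_inv x), []) \<in> moves\<^sup>*"
proof (induct n)
  case (Suc n)
  obtain v b where x: "x = (v, b)" by (cases x)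
  have eq: "replicate (Suc n) x @ replicate (Suc n) (letter_inv x) =
      replicate n x @ [(v, b), (v, \<not> b)] @ replicate n (letter_inv x)"
    by (simp add: x letter_inv_def replicate_append_same[symmetric])
  have "(replicate n x @ [(v, b), (v, \<not> b)] @ replicate n (letter_inv x),
      replicate n x @ replicate n (letter_inv x)) \<in> moves"
    using raag_step.cancel[of E "replicate n x" v b "replicate n (letter_inv x)"] by blast
  then have "(replicate (Suc n) x @ replicate (Suc n) (letter_inv x),
      replicate n x @ replicate n (letter_inv x)) \<in> moves"
    by (simp only: eq)
  with Suc show ?case by (meson converse_rtrancl_into_rtrancl)
qed simp

lemma power_word_moves: "(a, b) \<in> moves\<^sup>* \<Longrightarrow> (power_word N a, power_word N b) \<in> moves\<^sup>*"
proof -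
  have single: "(power_word N a, power_word N b) \<in> moves\<^sup>*" if "raag_step E a b" for a b
    using that
  proof (induct rule: raag_step.induct)
    case (cancel xs v b ys)
    show ?case
      using moves_append[OF moves_replicate_cancel, of "power_word N xs" N "(v, b)" "power_word N ys"]
      by (simp add: letter_inv_def)
  next
    case (commute u w xs b c ys)
    then have "comm_equiv E (xs @ [(u, b), (w, c)] @ ys) (xs @ [(w, c), (u, b)] @ ys)"
      using comm_step.intros[of E "(u, b)" "(w, c)" xs ys] by (simp add: r_into_rtranclp)
    then show ?case by (intro comm_equiv_moves comm_equiv_power_word)
  qed
  have "sym (moves\<^sup>*)" by (rule sym_rtrancl) (auto simp: sym_def)
  then have move: "(power_word N a, power_word N b) \<in> moves\<^sup>*" if "(a, b) \<in> moves" for a b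
    using that single[of a b] single[of b a] by (blast dest: symD)
  show "(a, b) \<in> moves\<^sup>* \<Longrightarrow> (power_word N a, power_word N b) \<in> moves\<^sup>*"
    by (induct rule: rtrancl_induct) (auto intro: rtrancl_trans move)
qed

lemma power_word_raag_rel: "(a, b) \<in> R \<Longrightarrow> (power_word N a, power_word N b) \<in> R"
  by (simp add: raag_rel_iff power_word_moves power_word_words)

definition word_inv :: "'v word \<Rightarrow> 'v word" where
  "word_inv w = rev (map letter_inv w)"

lemma word_inv_words: "w \<in> words \<Longrightarrow> word_inv w \<in> words"
  by (induct w) (auto simp: word_inv_def letter_inv_def)

lemma raag_rel_word_inv: "w \<in> words \<Longrightarrow> (word_inv w @ w, []) \<in> R"
proof (induct w)
  case (Cons x w)
  obtain v b where x: "x = (v, b)" by (cases x)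
  have "raag_step E (word_inv w @ [(v, \<not> b), (v, \<not> \<not> b)] @ w) (word_inv w @ w)"
    by (rule raag_step.cancel)
  then have "raag_step E (word_inv (x # w) @ x # w) (word_inv w @ w)"
    by (simp add: x word_inv_def letter_inv_def)
  then have "(word_inv (x # w) @ x # w, word_inv w @ w) \<in> R"
    using word_inv_words Cons.prems by (auto simp: raag_rel_iff intro: r_into_rtrancl)
  then show ?case using Cons raag_rel_trans by auto
qed (simp add: word_inv_def raag_rel_refl)

definition word_class :: "'v word \<Rightarrow> 'v word set" where
  "word_class a = R `` {a}"

lemma word_class_carrier: "a \<in> words \<Longrightarrow> word_class a \<in> carrier (raag V E)"
  unfolding word_class_def raag_def by (simp add: quotientI)

lemma carrier_raagE:
  "g \<in> carrier (raag V E) \<Longrightarrow> (\<And>a. a \<in> words \<Longrightarrow> g = word_class a \<Longrightarrow> P) \<Longrightarrow> P"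
  unfolding word_class_def raag_def by (auto elim!: quotientE)

lemma word_class_eq_iff: "a \<in> words \<Longrightarrow> b \<in> words \<Longrightarrow> word_class a = word_class b \<longleftrightarrow> (a, b) \<in> R"
  unfolding word_class_def using eq_equiv_class_iff[OF equiv_raag_rel] by simp

lemma word_class_eqI: "(a, b) \<in> R \<Longrightarrow> word_class a = word_class b"
  using word_class_eq_iff raag_rel_iff by blast

lemma one_raag: "\<one>\<^bsub>raag V E\<^esub> = word_class []"
  unfolding raag_def word_class_def by simp

lemma mult_word_class:
  assumes "a \<in> words" "b \<in> words"
  shows "word_class a \<otimes>\<^bsub>raag V E\<^esub> word_class b = word_class (a @ b)"
proof -
  have append_class: "word_class (a' @ b') = word_class (a @ b)"
    if "a' \<in> word_class a" "b' \<in> word_class b" for a' b'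
  proof (rule word_class_eqI)
    from that have "(a, a') \<in> R" "(b, b') \<in> R" unfolding word_class_def by auto
    then show "(a' @ b', a @ b) \<in> R" by (rule raag_rel_sym[OF raag_rel_append])
  qed
  have "a \<in> word_class a" "b \<in> word_class b"
    using assms raag_rel_refl unfolding word_class_def by auto
  then have "(\<Union>a'\<in>word_class a. \<Union>b'\<in>word_class b. word_class (a' @ b')) = word_class (a @ b)"
    using append_class by blast
  moreover have "word_class a \<otimes>\<^bsub>raag V E\<^esub> word_class b =
      (\<Union>a'\<in>word_class a. \<Union>b'\<in>word_class b. word_class (a' @ b'))"
    unfolding raag_def word_class_def by simp
  ultimately show ?thesis by simp
qed

lemma group_raag: "group (raag V E)"
proof (rule groupI)
  fix g h k
  assume g: "g \<in> carrier (raag V E)" and h: "h \<in> carrier (raag V E)"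
  from g obtain a where a: "a \<in> words" "g = word_class a" by (rule carrier_raagE)
  from h obtain b where b: "b \<in> words" "h = word_class b" by (rule carrier_raagE)
  show "g \<otimes>\<^bsub>raag V E\<^esub> h \<in> carrier (raag V E)"
    using a b by (simp add: mult_word_class word_class_carrier)
  show "\<one>\<^bsub>raag V E\<^esub> \<otimes>\<^bsub>raag V E\<^esub> g = g"
    using a mult_word_class[of "[]" a] by (simp add: one_raag)
  show "\<exists>h\<in>carrier (raag V E). h \<otimes>\<^bsub>raag V E\<^esub> g = \<one>\<^bsub>raag V E\<^esub>"
  proof
    show "word_class (word_inv a) \<in> carrier (raag V E)"
      using a(1) by (simp add: word_inv_words word_class_carrier)
    show "word_class (word_inv a) \<otimes>\<^bsub>raag V E\<^esub> g = \<one>\<^bsub>raag V E\<^esub>"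
      using a raag_rel_word_inv[of a]
      by (simp add: mult_word_class word_inv_words one_raag word_class_eqI)
  qed
  assume "k \<in> carrier (raag V E)"
  then obtain c where "c \<in> words" "k = word_class c" by (rule carrier_raagE)
  with a b show "g \<otimes>\<^bsub>raag V E\<^esub> h \<otimes>\<^bsub>raag V E\<^esub> k = g \<otimes>\<^bsub>raag V E\<^esub> (h \<otimes>\<^bsub>raag V E\<^esub> k)"
    by (simp add: mult_word_class)
qed (simp add: one_raag word_class_carrier)

definition power_map :: "nat \<Rightarrow> 'v word set \<Rightarrow> 'v word set" where
  "power_map N g = (\<Union>a\<in>g. word_class (power_word N a))"

lemma power_map_word_class:
  assumes "a \<in> words" shows "power_map N (word_class a) = word_class (power_word N a)"
proof -
  have "word_class (power_word N a') = word_class (power_word N a)" if "a' \<in> word_class a" for a'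
  proof (rule word_class_eqI)
    from that have "(a, a') \<in> R" unfolding word_class_def by simp
    then show "(power_word N a', power_word N a) \<in> R" by (rule power_word_raag_rel[OF raag_rel_sym])
  qed
  moreover have "a \<in> word_class a" using raag_rel_refl[OF assms] unfolding word_class_def by simp
  ultimately show ?thesis unfolding power_map_def by blast
qed

lemma power_map_hom: "power_map N \<in> hom (raag V E) (raag V E)"
proof (rule homI)
  fix g h
  assume g: "g \<in> carrier (raag V E)" and h: "h \<in> carrier (raag V E)"
  from g obtain a where "a \<in> words" "g = word_class a" by (rule carrier_raagE)
  moreover from h obtain b where "b \<in> words" "h = word_class b" by (rule carrier_raagE)
  ultimately show "power_map N g \<in> carrier (raag V E)"
    and "power_map N (g \<otimes>\<^bsub>raag V E\<^esub> h) = power_map N g \<otimes>\<^bsub>raag V E\<^esub> power_map N h"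
    by (simp_all add: power_map_word_class mult_word_class power_word_words word_class_carrier)
qed

lemma inj_power_map:
  assumes N: "0 < N" shows "inj_on (power_map N) (carrier (raag V E))"
proof -
  have "g = \<one>\<^bsub>raag V E\<^esub>"
    if "g \<in> carrier (raag V E)" "power_map N g = \<one>\<^bsub>raag V E\<^esub>" for g
  proof -
    from that(1) obtain a where a: "a \<in> words" "g = word_class a" by (rule carrier_raagE)
    with that(2) have "(power_word N a, []) \<in> R"
      by (simp add: power_map_word_class one_raag word_class_eq_iff power_word_words)
    then have "reduce E a = []"
      using reduce_power_word_Nil[OF N] raag_rel_Nil_iff_reduce power_word_words a(1) by blast
    then show ?thesis using a raag_rel_Nil_iff_reduce by (simp add: one_raag word_class_eqI)
  qed
  then show ?thesis using inj_on_one_iff'[OF power_map_hom group_raag group_raag] by blast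
qed

lemma word_class_replicate:
  assumes "x \<in> V \<times> UNIV"
  shows "word_class (replicate n x) = word_class [x] [^]\<^bsub>raag V E\<^esub> n"
proof (induct n)
  case (Suc n)
  have "word_class (replicate (Suc n) x) = word_class (replicate n x @ [x])"
    by (simp add: replicate_append_same)
  also have "\<dots> = word_class (replicate n x) \<otimes>\<^bsub>raag V E\<^esub> word_class [x]"
    using assms by (simp add: mult_word_class in_lists_conv_set)
  finally show ?case using Suc by simp
qed (simp add: one_raag)

lemma mon_into_finite_index_subgroup:
  assumes H: "subgroup H (raag V E)" and fin: "finite (rcosets\<^bsub>raag V E\<^esub> H)"
  shows "\<exists>f. f \<in> mon (raag V E) (raag V E\<lparr>carrier := H\<rparr>)"
proof -
  have "finite V" using graph unfolding simplicial_graph_def by blast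
  then have "finite ((\<lambda>x. word_class [x]) ` (V \<times> UNIV))" by simp
  moreover have "(\<lambda>x. word_class [x]) ` (V \<times> UNIV) \<subseteq> carrier (raag V E)"
    using word_class_carrier by (simp add: image_subset_iff)
  ultimately have "\<exists>N::nat>0. \<forall>g\<in>(\<lambda>x. word_class [x]) ` (V \<times> UNIV). g [^]\<^bsub>raag V E\<^esub> N \<in> H"
    by (rule group.finite_index_common_pow_mem[OF group_raag H fin])
  then obtain N :: nat where N: "0 < N"
    and pow: "\<And>x. x \<in> V \<times> UNIV \<Longrightarrow> word_class [x] [^]\<^bsub>raag V E\<^esub> N \<in> H"
    by auto
  have "word_class (power_word N w) \<in> H" if "w \<in> words" for w
    using that
  proof (induction w)
    case (Cons x w)
    then have x: "x \<in> V \<times> UNIV" and w: "w \<in> words" by auto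
    have "word_class (power_word N (x # w)) =
        word_class [x] [^]\<^bsub>raag V E\<^esub> N \<otimes>\<^bsub>raag V E\<^esub> word_class (power_word N w)"
      using x power_word_words[OF w] mult_word_class[of "replicate N x" "power_word N w"]
        word_class_replicate[OF x, of N]
      by (simp add: in_lists_conv_set)
    then show ?case using pow[OF x] Cons.IH subgroup.m_closed[OF H] by simp
  qed (simp add: one_raag[symmetric] subgroup.one_closed[OF H])
  then have "power_map N g \<in> H" if "g \<in> carrier (raag V E)" for g
    using that power_map_word_class by (metis carrier_raagE)
  then have "power_map N \<in> hom (raag V E) (raag V E\<lparr>carrier := H\<rparr>)"
    using power_map_hom[of N] by (auto simp: hom_def)
  with inj_power_map[OF N] show ?thesis unfolding mon_def by blast
qed

end

theorem mainTheorem12: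
  fixes V :: "'v set" and E :: "'v \<Rightarrow> 'v \<Rightarrow> bool"
    and W :: "'w set" and F :: "'w \<Rightarrow> 'w \<Rightarrow> bool"
  assumes "simplicial_graph V E" and "simplicial_graph W F"
    and "commensurable (raag V E) (raag W F)"
  shows "(\<exists>K. subgroup K (raag V E) \<and> raag W F \<cong> (raag V E)\<lparr>carrier := K\<rparr>) \<and>
         (\<exists>K. subgroup K (raag W F) \<and> raag V E \<cong> (raag W F)\<lparr>carrier := K\<rparr>)"
proof -
  interpret V: raag_graph V E by (rule raag_graph.intro) (rule assms(1))
  interpret W: raag_graph W F by (rule raag_graph.intro) (rule assms(2))
  have "commensurable (raag W F) (raag V E)"
    using commensurable_sym[OF V.group_raag W.group_raag assms(3)] .
  then show ?thesis
    using commensurable_embeds[OF W.group_raag V.group_raag _ W.mon_into_finite_index_subgroup]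
      commensurable_embeds[OF V.group_raag W.group_raag assms(3) V.mon_into_finite_index_subgroup]
    by blast
qed

end
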